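(* Let $S$ be a numerical semigroup with a unique Betti element. Then $S$ is telescopic and $\mathrm{Ap}(S)$ is $\alpha$-rectangular. Moreover, the converses fail: $S=\langle 4,6,13\rangle$ is associated to a plane branch (hence telescopic with $\alpha$-rectangular Apéry set) but does not have a unique Betti element.
   Context: A numerical semigroup is a submonoid $S$ of $(\mathbb N,+)$ with finite complement in $\mathbb N$; $g_1<\dots<g_\nu$ is its minimal system of generators, $m=g_1$, and $\mathrm{Ap}(S)=\{s\in S: s-m\notin S\}$. For $i=2,\dots,\nu$: $\tau_i=\min\{h\in\mathbb N: hg_i\in\langle g_1,\dots,g_{i-1}\rangle\}-1$ and $\alpha_i=\max\{h\in\mathbb N: hg_i\in\mathrm{Ap}(S)\}$. $S$ is telescopic if $\mathrm{Ap}(S)=\{\sum_{i=2}^\nu\lambda_ig_i: 0\le\lambda_i\le\tau_i\}$; $S$ is associated to a plane branch if it is telescopic and $(\tau_i+1)g_i<g_{i+1}$ for all $i=2,\dots,\nu-1$; $\mathrm{Ap}(S)$ is $\alpha$-rectangular if $\mathrm{Ap}(S)=\{\sum_{i=2}^\nu\lambda_ig_i: 0\le\lambda_i\le\alpha_i\}$. $S$ has a unique Betti element if (equivalently) there exist pairwise coprime integers $a_1,\dots,a_\nu>1$ with $g_i=\prod_{j\ne i}a_j$ for all $i$. *)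

theory Defs
  imports Main
begin

definition numerical_semigroup :: "nat set \<Rightarrow> bool" where
  "numerical_semigroup S \<longleftrightarrow> 0 \<in> S \<and> (\<forall>x\<in>S. \<forall>y\<in>S. x + y \<in> S) \<and> finite (UNIV - S)"

definition generated :: "nat set \<Rightarrow> nat set" where
  "generated A = {x. \<exists>c :: nat \<Rightarrow> nat. x = (\<Sum>a\<in>A. c a * a)}"

definition mingens :: "nat set \<Rightarrow> nat set" where
  "mingens S = {s \<in> S. s \<noteq> 0 \<and> \<not> (\<exists>x\<in>S. \<exists>y\<in>S. x \<noteq> 0 \<and> y \<noteq> 0 \<and> s = x + y)}"

definition emb_dim :: "nat set \<Rightarrow> nat" where
  "emb_dim S = card (mingens S)"

text \<open>gen S i = g_i for i = 1..nu, where g_1 < ... < g_nu.\<close>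
definition gen :: "nat set \<Rightarrow> nat \<Rightarrow> nat" where
  "gen S i = sorted_list_of_set (mingens S) ! (i - 1)"

definition multiplicity :: "nat set \<Rightarrow> nat" where
  "multiplicity S = gen S 1"

text \<open>Apery set w.r.t. the multiplicity: s in S with s - m not in S (as an integer).\<close>
definition apery :: "nat set \<Rightarrow> nat set" where
  "apery S = {s \<in> S. s < multiplicity S \<or> s - multiplicity S \<notin> S}"

definition monoid_first :: "nat set \<Rightarrow> nat \<Rightarrow> nat set" where
  "monoid_first S k = {(\<Sum>j=1..k. c j * gen S j) | c :: nat \<Rightarrow> nat. True}"

definition tau :: "nat set \<Rightarrow> nat \<Rightarrow> nat" where
  "tau S i = (LEAST h. h > 0 \<and> h * gen S i \<in> monoid_first S (i - 1)) - 1"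

definition alpha :: "nat set \<Rightarrow> nat \<Rightarrow> nat" where
  "alpha S i = Max {h. h * gen S i \<in> apery S}"

definition telescopic :: "nat set \<Rightarrow> bool" where
  "telescopic S \<longleftrightarrow> apery S =
     {(\<Sum>i=2..emb_dim S. c i * gen S i) | c :: nat \<Rightarrow> nat. \<forall>i\<in>{2..emb_dim S}. c i \<le> tau S i}"

definition alpha_rectangular :: "nat set \<Rightarrow> bool" where
  "alpha_rectangular S \<longleftrightarrow> apery S =
     {(\<Sum>i=2..emb_dim S. c i * gen S i) | c :: nat \<Rightarrow> nat. \<forall>i\<in>{2..emb_dim S}. c i \<le> alpha S i}"

definition plane_branch :: "nat set \<Rightarrow> bool" where
  "plane_branch S \<longleftrightarrow> telescopic S \<and>
     (\<forall>i\<in>{2..<emb_dim S}. (tau S i + 1) * gen S i < gen S (i + 1))"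

definition unique_betti :: "nat set \<Rightarrow> bool" where
  "unique_betti S \<longleftrightarrow> (\<exists>a :: nat \<Rightarrow> nat.
     (\<forall>i\<in>{1..emb_dim S}. a i > 1) \<and>
     (\<forall>i\<in>{1..emb_dim S}. \<forall>j\<in>{1..emb_dim S}. i \<noteq> j \<longrightarrow> coprime (a i) (a j)) \<and>
     (\<forall>i\<in>{1..emb_dim S}. gen S i = (\<Prod>j\<in>{1..emb_dim S} - {i}. a j)))"

end

theory Submission
  imports Defs "HOL-Number_Theory.Cong"
begin

text \<open>
  If g_i is the product of the a_j with j \<noteq> i, all products a_i g_i coincide (they are the
  Betti element \<Prod>_j a_j). Trading a_i copies of g_i for a_1 copies of g_1 writes every element
  of S as d_1 g_1 + \<Sum>_{i\<ge>2} d_i g_i with d_i < a_i; since a_k divides every g_j with j \<noteq> k but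
  is coprime to g_k, the d_i with i \<ge> 2 are determined by the residue modulo g_1. Hence the
  Apery set is the box 0 \<le> \<lambda>_i \<le> a_i - 1, and both \<tau>_i and \<alpha>_i equal a_i - 1.

  For \<langle>4, 6, 13\<rangle> everything is computed from the gap set {1, 2, 3, 5, 7, 9, 11, 15}. It has
  no unique Betti element because for \<nu> \<ge> 3 every g_i is a product of at least two factors
  greater than 1, whereas g_3 = 13 is prime.
\<close>

lemma numerical_semigroup_mult_mem:
  "numerical_semigroup S \<Longrightarrow> x \<in> S \<Longrightarrow> k * x \<in> S"
  by (induction k) (auto simp: numerical_semigroup_def)

lemma numerical_semigroup_sum_mem:
  assumes "numerical_semigroup S" and "finite A" and "\<And>i. i \<in> A \<Longrightarrow> g i \<in> S"
  shows "(\<Sum>i\<in>A. c i * g i) \<in> S"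
  using assms(2,3)
proof (induction A rule: finite_induct)
  case empty
  show ?case using assms(1) by (simp add: numerical_semigroup_def)
next
  case (insert x F)
  then show ?case
    using assms(1) numerical_semigroup_mult_mem[OF assms(1), of "g x" "c x"]
    by (simp add: numerical_semigroup_def)
qed

lemma sum_single_coeff:
  fixes g :: "'a \<Rightarrow> nat"
  assumes "finite A" and "i \<in> A"
  shows "(\<Sum>j\<in>A. (if j = i then h else 0) * g j) = h * g i"
proof -
  have "(\<Sum>j\<in>A. (if j = i then h else 0) * g j) = (\<Sum>j\<in>A. if j = i then h * g j else 0)"
    by (rule sum.cong) auto
  then show ?thesis using assms by (simp add: sum.delta)
qed

lemma finite_mingens:
  assumes "numerical_semigroup S"
  shows "finite (mingens S)"
proof -
  have "finite (UNIV - S)" using assms by (simp add: numerical_semigroup_def)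
  then obtain B where "\<forall>x\<in>UNIV - S. x \<le> B"
    by (metis finite_nat_set_iff_bounded_le)
  then have B: "\<And>x. B < x \<Longrightarrow> x \<in> S" by (meson DiffI UNIV_I not_le)
  have "mingens S \<subseteq> {..2 * B + 1}"
  proof
    fix s assume s: "s \<in> mingens S"
    show "s \<in> {..2 * B + 1}"
    proof (rule ccontr)
      assume "s \<notin> {..2 * B + 1}"
      then have "2 * B + 1 < s" by simp
      then have "B + 1 \<in> S" "s - (B + 1) \<in> S" "s - (B + 1) \<noteq> 0"
        "s = (B + 1) + (s - (B + 1))"
        using B by simp_all
      then have "\<exists>x\<in>S. \<exists>y\<in>S. x \<noteq> 0 \<and> y \<noteq> 0 \<and> s = x + y"
        by (intro bexI[of _ "B + 1"] bexI[of _ "s - (B + 1)"]) simp_all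
      with s show False unfolding mingens_def by blast
    qed
  qed
  then show ?thesis using finite_subset by blast
qed

lemma gen_in_mingens:
  assumes "numerical_semigroup S" and "i \<in> {1..emb_dim S}"
  shows "gen S i \<in> mingens S"
proof -
  have fin: "finite (mingens S)" using finite_mingens[OF assms(1)] .
  with assms(2) have "i - 1 < length (sorted_list_of_set (mingens S))"
    by (auto simp: emb_dim_def)
  then have "sorted_list_of_set (mingens S) ! (i - 1) \<in> set (sorted_list_of_set (mingens S))"
    by (rule nth_mem)
  with fin show ?thesis unfolding gen_def by simp
qed

lemma gen_in_semigroup:
  "numerical_semigroup S \<Longrightarrow> i \<in> {1..emb_dim S} \<Longrightarrow> gen S i \<in> S"
  using gen_in_mingens unfolding mingens_def by blast

lemma mingens_subset_gen_image:
  assumes "numerical_semigroup S"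
  shows "mingens S \<subseteq> gen S ` {1..emb_dim S}"
proof
  fix s assume "s \<in> mingens S"
  then obtain k where k: "k < length (sorted_list_of_set (mingens S))"
    "sorted_list_of_set (mingens S) ! k = s"
    using finite_mingens[OF assms] by (metis in_set_conv_nth set_sorted_list_of_set)
  then have "Suc k \<in> {1..emb_dim S}" "gen S (Suc k) = s"
    by (auto simp: emb_dim_def gen_def)
  then show "s \<in> gen S ` {1..emb_dim S}" by force
qed

lemma numerical_semigroup_gen_combination:
  assumes "numerical_semigroup S" and "s \<in> S"
  shows "\<exists>c. s = (\<Sum>i=1..emb_dim S. c i * gen S i)"
  using assms(2)
proof (induction s rule: less_induct)
  case (less s)
  consider "s = 0" | "s \<in> mingens S"
    | x y where "x \<in> S" "y \<in> S" "x \<noteq> 0" "y \<noteq> 0" "s = x + y"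
    using less.prems unfolding mingens_def by blast
  then show ?case
  proof cases
    case 1
    then show ?thesis by (intro exI[of _ "\<lambda>_. 0"]) simp
  next
    case 2
    then obtain i where i: "i \<in> {1..emb_dim S}" "s = gen S i"
      using mingens_subset_gen_image[OF assms(1)] by blast
    then show ?thesis
      by (intro exI[of _ "\<lambda>j. if j = i then 1 else 0"]) (simp add: sum_single_coeff)
  next
    case (3 x y)
    then have "x < s" "y < s" by auto
    with 3 obtain cx cy where "x = (\<Sum>i=1..emb_dim S. cx i * gen S i)"
      "y = (\<Sum>i=1..emb_dim S. cy i * gen S i)"
      using less.IH by meson
    with 3 show ?thesis
      by (intro exI[of _ "\<lambda>i. cx i + cy i"]) (simp add: add_mult_distrib sum.distrib)
  qed
qed

lemma emb_dim_pos:
  assumes "numerical_semigroup S"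
  shows "emb_dim S \<ge> 1"
proof (rule ccontr)
  assume "\<not> emb_dim S \<ge> 1"
  then have "S \<subseteq> {0}" using numerical_semigroup_gen_combination[OF assms] by fastforce
  then have "UNIV \<subseteq> (UNIV - S) \<union> {0}" by blast
  moreover have "finite (UNIV - S)" using assms by (simp add: numerical_semigroup_def)
  ultimately have "finite (UNIV :: nat set)" using finite_subset by blast
  then show False by simp
qed

section \<open>Semigroups with a unique Betti element\<close>

definition apery_box :: "nat set \<Rightarrow> (nat \<Rightarrow> nat) \<Rightarrow> nat set" where
  "apery_box S b =
     {(\<Sum>i=2..emb_dim S. c i * gen S i) | c :: nat \<Rightarrow> nat. \<forall>i\<in>{2..emb_dim S}. c i \<le> b i}"

lemma telescopic_iff_apery_box: "telescopic S \<longleftrightarrow> apery S = apery_box S (tau S)"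
  by (simp add: telescopic_def apery_box_def)

lemma alpha_rectangular_iff_apery_box: "alpha_rectangular S \<longleftrightarrow> apery S = apery_box S (alpha S)"
  by (simp add: alpha_rectangular_def apery_box_def)

lemma apery_box_cong:
  "(\<And>i. i \<in> {2..emb_dim S} \<Longrightarrow> b i = b' i) \<Longrightarrow> apery_box S b = apery_box S b'"
  unfolding apery_box_def by (metis (no_types, lifting))

locale unique_betti_factorization =
  fixes S :: "nat set" and a :: "nat \<Rightarrow> nat"
  assumes numerical: "numerical_semigroup S"
    and factor_gt_one: "\<And>i. i \<in> {1..emb_dim S} \<Longrightarrow> 1 < a i"
    and factors_coprime:
      "\<And>i j. i \<in> {1..emb_dim S} \<Longrightarrow> j \<in> {1..emb_dim S} \<Longrightarrow> i \<noteq> j \<Longrightarrow> coprime (a i) (a j)"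
    and gen_eq_prod: "\<And>i. i \<in> {1..emb_dim S} \<Longrightarrow> gen S i = (\<Prod>j\<in>{1..emb_dim S} - {i}. a j)"
begin

abbreviation nu :: nat where "nu \<equiv> emb_dim S"
abbreviation g :: "nat \<Rightarrow> nat" where "g \<equiv> gen S"

lemma one_le_nu: "1 \<le> nu"
  using emb_dim_pos[OF numerical] .

lemma one_mem_indices: "1 \<in> {1..nu}"
  using one_le_nu by simp

lemma factor_mult_gen_eq_prod: "i \<in> {1..nu} \<Longrightarrow> a i * g i = (\<Prod>j\<in>{1..nu}. a j)"
  using gen_eq_prod by (metis finite_atLeastAtMost prod.remove)

lemma factor_mult_gen_eq_first: "i \<in> {1..nu} \<Longrightarrow> a i * g i = a 1 * g 1"
  using factor_mult_gen_eq_prod one_mem_indices by metis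

lemma factor_dvd_gen: "i \<in> {1..nu} \<Longrightarrow> k \<in> {1..nu} \<Longrightarrow> i \<noteq> k \<Longrightarrow> a k dvd g i"
  using gen_eq_prod by (metis DiffI dvd_prodI finite_Diff finite_atLeastAtMost singletonD)

lemma coprime_gen_factor: "i \<in> {1..nu} \<Longrightarrow> coprime (g i) (a i)"
  using gen_eq_prod factors_coprime by (metis DiffE insertCI prod_coprime_left)

lemma gen_one_pos: "0 < g 1"
  using gen_eq_prod[OF one_mem_indices] factor_gt_one
  by (metis DiffD1 gr_implies_not0 linorder_neqE_nat prod_pos)

lemma gen_in_S: "i \<in> {1..nu} \<Longrightarrow> g i \<in> S"
  using gen_in_semigroup[OF numerical] .

lemma reduced_representation:
  assumes "s \<in> S"
  obtains d where "s = d 1 * g 1 + (\<Sum>i=2..nu. d i * g i)" "\<forall>i\<in>{2..nu}. d i < a i"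
proof -
  obtain c where c: "s = (\<Sum>i=1..nu. c i * g i)"
    using numerical_semigroup_gen_combination[OF numerical assms] by blast
  \<comment> \<open>trade each block of a i copies of g i for a 1 copies of g 1\<close>
  have trade: "c i * g i = (c i div a i) * (a 1 * g 1) + (c i mod a i) * g i" if "i \<in> {2..nu}" for i
  proof -
    have "i \<in> {1..nu}" using that by simp
    then have betti: "a i * g i = a 1 * g 1" by (rule factor_mult_gen_eq_first)
    have "c i * g i = (c i div a i * a i + c i mod a i) * g i" by (simp only: div_mult_mod_eq)
    also have "\<dots> = (c i div a i) * (a i * g i) + (c i mod a i) * g i"
      by (simp only: add_mult_distrib mult.assoc)
    finally show ?thesis by (simp only: betti)
  qed
  define q where "q = (\<Sum>j=2..nu. c j div a j)"
  define d where "d i = (if i = 1 then c 1 + q * a 1 else c i mod a i)" for i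
  have tail: "(\<Sum>i=2..nu. d i * g i) = (\<Sum>i=2..nu. (c i mod a i) * g i)"
    by (rule sum.cong) (auto simp: d_def)
  have "s = c 1 * g 1 + (\<Sum>i=2..nu. c i * g i)"
    using c one_le_nu by (simp add: sum.atLeast_Suc_atMost numeral_2_eq_2)
  also have "(\<Sum>i=2..nu. c i * g i) = (\<Sum>i=2..nu. (c i div a i) * (a 1 * g 1) + (c i mod a i) * g i)"
    using trade by (rule sum.cong[OF refl])
  also have "\<dots> = q * (a 1 * g 1) + (\<Sum>i=2..nu. d i * g i)"
    by (simp only: sum.distrib sum_distrib_right tail q_def)
  finally have "s = d 1 * g 1 + (\<Sum>i=2..nu. d i * g i)"
    by (simp add: d_def algebra_simps)
  moreover have "d i < a i" if "i \<in> {2..nu}" for i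
    using factor_gt_one[of i] that by (simp add: d_def)
  ultimately show ?thesis using that by blast
qed

lemma sum_cong_single_term:
  assumes "k \<in> {2..nu}"
  shows "[(\<Sum>i=2..nu. c i * g i) = c k * g k] (mod a k)"
proof -
  have "(\<Sum>i=2..nu. c i * g i) = c k * g k + (\<Sum>i\<in>{2..nu} - {k}. c i * g i)"
    using assms by (simp add: sum.remove)
  moreover have "a k dvd (\<Sum>i\<in>{2..nu} - {k}. c i * g i)"
    using assms by (intro dvd_sum dvd_mult) (auto intro: factor_dvd_gen)
  ultimately show ?thesis by (simp add: cong_add_lcancel_0_nat cong_0_iff)
qed

lemma coeff_eq_of_cong:
  assumes "k \<in> {2..nu}" and "c k < a k" and "d k < a k"
    and "[(\<Sum>i=2..nu. c i * g i) = (\<Sum>i=2..nu. d i * g i)] (mod a k)"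
  shows "c k = d k"
proof -
  have "[c k * g k = d k * g k] (mod a k)"
    using cong_trans[OF cong_sym[OF sum_cong_single_term[OF assms(1)]]
        cong_trans[OF assms(4) sum_cong_single_term[OF assms(1)]]] .
  then have "[c k = d k] (mod a k)"
    using cong_mult_rcancel_nat coprime_gen_factor assms(1) by auto
  then show ?thesis using assms(2,3) by (rule cong_less_modulus_unique_nat)
qed

lemma apery_subset_apery_box: "apery S \<subseteq> apery_box S (\<lambda>i. a i - 1)"
proof
  fix s assume s: "s \<in> apery S"
  then have sS: "s \<in> S" and no_shift: "s < g 1 \<or> s - g 1 \<notin> S"
    by (auto simp: apery_def Defs.multiplicity_def)
  obtain d where d: "s = d 1 * g 1 + (\<Sum>i=2..nu. d i * g i)" "\<forall>i\<in>{2..nu}. d i < a i"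
    by (rule reduced_representation[OF sS])
  have "d 1 = 0"
  proof (rule ccontr)
    assume "d 1 \<noteq> 0"
    then obtain e where "d 1 = Suc e" using not0_implies_Suc by blast
    then have "s = g 1 + (e * g 1 + (\<Sum>i=2..nu. d i * g i))" using d(1) by simp
    moreover have "e * g 1 + (\<Sum>i=2..nu. d i * g i) \<in> S"
      using numerical numerical_semigroup_mult_mem[OF numerical gen_in_S[OF one_mem_indices]]
        numerical_semigroup_sum_mem[OF numerical, of "{2..nu}" g d] gen_in_S
      by (simp add: numerical_semigroup_def)
    ultimately show False using no_shift by simp
  qed
  with d show "s \<in> apery_box S (\<lambda>i. a i - 1)"
    unfolding apery_box_def by fastforce
qed

lemma apery_box_subset_apery: "apery_box S (\<lambda>i. a i - 1) \<subseteq> apery S"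
proof
  fix r assume "r \<in> apery_box S (\<lambda>i. a i - 1)"
  then obtain c where r: "r = (\<Sum>i=2..nu. c i * g i)" and bound: "\<forall>i\<in>{2..nu}. c i \<le> a i - 1"
    unfolding apery_box_def by blast
  have "c i < a i" if "i \<in> {2..nu}" for i
    using bound factor_gt_one[of i] that by fastforce
  note c = r this
  have "r \<in> S"
    using c(1) numerical_semigroup_sum_mem[OF numerical, of "{2..nu}" g c] gen_in_S by simp
  moreover have "\<not> (g 1 \<le> r \<and> r - g 1 \<in> S)"
  proof
    assume shift: "g 1 \<le> r \<and> r - g 1 \<in> S"
    then obtain d where d: "r - g 1 = d 1 * g 1 + (\<Sum>i=2..nu. d i * g i)" "\<forall>i\<in>{2..nu}. d i < a i"
      using reduced_representation by blast
    have "r = g 1 + (r - g 1)" using shift by simp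
    also have "\<dots> = (d 1 + 1) * g 1 + (\<Sum>i=2..nu. d i * g i)" using d(1) by simp
    finally have r: "r = (d 1 + 1) * g 1 + (\<Sum>i=2..nu. d i * g i)" .
    have "c k = d k" if k: "k \<in> {2..nu}" for k
    proof (rule coeff_eq_of_cong[where c = c and d = d, OF k c(2)[OF k] d(2)[rule_format, OF k]])
      have "a k dvd g 1" using k factor_dvd_gen[of 1 k] by simp
      then have "[(d 1 + 1) * g 1 = 0] (mod a k)" by (simp add: cong_0_iff)
      then show "[(\<Sum>i=2..nu. c i * g i) = (\<Sum>i=2..nu. d i * g i)] (mod a k)"
        using c(1) r by (metis cong_add_rcancel_0_nat)
    qed
    then have "(\<Sum>i=2..nu. c i * g i) = (\<Sum>i=2..nu. d i * g i)" by simp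
    then show False using c(1) r gen_one_pos by simp
  qed
  ultimately show "r \<in> apery S" by (auto simp: apery_def Defs.multiplicity_def)
qed

lemma apery_eq_apery_box: "apery S = apery_box S (\<lambda>i. a i - 1)"
  using apery_subset_apery_box apery_box_subset_apery by blast

lemma tau_eq: "i \<in> {2..nu} \<Longrightarrow> tau S i = a i - 1"
proof -
  assume i: "i \<in> {2..nu}"
  then have i1: "i \<in> {1..nu}" by simp
  have "(LEAST h. 0 < h \<and> h * g i \<in> monoid_first S (i - 1)) = a i"
  proof (rule Least_equality)
    have single: "(\<Sum>j=1..i-1. (if j = 1 then a 1 else 0) * g j) = a 1 * g 1"
      using i by (intro sum_single_coeff) auto
    have "a 1 * g 1 \<in> monoid_first S (i - 1)"
      unfolding monoid_first_def
      by (rule CollectI, rule exI[of _ "\<lambda>j. if j = 1 then a 1 else 0"]) (simp only: single)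
    then show "0 < a i \<and> a i * g i \<in> monoid_first S (i - 1)"
      using factor_mult_gen_eq_first[OF i1] factor_gt_one[OF i1] by simp
  next
    fix h assume h: "0 < h \<and> h * g i \<in> monoid_first S (i - 1)"
    then obtain c where "h * g i = (\<Sum>j=1..i-1. c j * g j)"
      unfolding monoid_first_def by auto
    moreover have "a i dvd (\<Sum>j=1..i-1. c j * g j)"
      using i by (intro dvd_sum dvd_mult) (auto intro: factor_dvd_gen)
    ultimately have "a i dvd h * g i" by simp
    then have "a i dvd h"
      using coprime_gen_factor[OF i1] by (simp add: coprime_commute coprime_dvd_mult_left_iff)
    then show "a i \<le> h" using h by (simp add: dvd_imp_le)
  qed
  then show ?thesis by (simp add: tau_def)
qed

lemma multiple_in_apery_iff: "i \<in> {2..nu} \<Longrightarrow> h * g i \<in> apery S \<longleftrightarrow> h < a i"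
proof
  assume i: "i \<in> {2..nu}" and h: "h * g i \<in> apery S"
  then have i1: "i \<in> {1..nu}" by simp
  show "h < a i"
  proof (rule ccontr)
    assume "\<not> h < a i"
    then obtain k where k: "h = a i + k" using le_Suc_ex not_less by blast
    obtain e where e: "a 1 = Suc e" using factor_gt_one[OF one_mem_indices] less_imp_Suc_add by blast
    have "h * g i = a i * g i + k * g i" using k by (simp add: add_mult_distrib)
    also have "\<dots> = g 1 + (e * g 1 + k * g i)" using factor_mult_gen_eq_first[OF i1] e by simp
    finally have "h * g i = g 1 + (e * g 1 + k * g i)" .
    moreover have "e * g 1 + k * g i \<in> S"
      using numerical numerical_semigroup_mult_mem[OF numerical gen_in_S[OF one_mem_indices]]
        numerical_semigroup_mult_mem[OF numerical gen_in_S[OF i1]]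
      by (simp add: numerical_semigroup_def)
    ultimately show False using h by (auto simp: apery_def Defs.multiplicity_def)
  qed
next
  assume i: "i \<in> {2..nu}" and "h < a i"
  moreover have "(\<Sum>j=2..nu. (if j = i then h else 0) * g j) = h * g i"
    using i by (intro sum_single_coeff) auto
  ultimately have "h * g i \<in> apery_box S (\<lambda>i. a i - 1)"
    unfolding apery_box_def by (intro CollectI exI[of _ "\<lambda>j. if j = i then h else 0"]) auto
  then show "h * g i \<in> apery S" using apery_eq_apery_box by simp
qed

lemma alpha_eq: "i \<in> {2..nu} \<Longrightarrow> alpha S i = a i - 1"
proof -
  assume "i \<in> {2..nu}"
  then have "{h. h * g i \<in> apery S} = {..a i - 1}"
    using multiple_in_apery_iff factor_gt_one[of i] by fastforce
  moreover have "Max {..a i - 1} = a i - 1" by (rule Max_eqI) auto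
  ultimately show ?thesis by (simp add: alpha_def)
qed

lemma telescopic: "telescopic S"
proof -
  have "apery_box S (\<lambda>i. a i - 1) = apery_box S (tau S)"
    by (rule apery_box_cong) (simp add: tau_eq)
  then show ?thesis by (simp add: telescopic_iff_apery_box apery_eq_apery_box)
qed

lemma alpha_rectangular: "alpha_rectangular S"
proof -
  have "apery_box S (\<lambda>i. a i - 1) = apery_box S (alpha S)"
    by (rule apery_box_cong) (simp add: alpha_eq)
  then show ?thesis by (simp add: alpha_rectangular_iff_apery_box apery_eq_apery_box)
qed

end

theorem unique_betti_imp_telescopic_alpha_rectangular:
  assumes "numerical_semigroup S" and "unique_betti S"
  shows "telescopic S \<and> alpha_rectangular S"
proof -
  obtain a where "unique_betti_factorization S a"
    using assms unfolding unique_betti_def unique_betti_factorization_def by blast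
  then show ?thesis
    using unique_betti_factorization.telescopic unique_betti_factorization.alpha_rectangular by blast
qed

lemma unique_betti_gen_not_prime:
  assumes "unique_betti S" and "3 \<le> emb_dim S" and i: "i \<in> {1..emb_dim S}"
  shows "\<not> prime (gen S i)"
proof
  assume prime: "prime (gen S i)"
  obtain a where a_gt: "\<forall>i\<in>{1..emb_dim S}. 1 < a i"
    and gen: "\<forall>i\<in>{1..emb_dim S}. gen S i = (\<Prod>j\<in>{1..emb_dim S} - {i}. a j)"
    using assms(1) unfolding unique_betti_def by blast
  define J where "J = {1..emb_dim S} - {i}"
  have "2 \<le> card J" using assms(2) i by (simp add: J_def)
  then obtain j k where jk: "j \<in> J" "k \<in> J" "j \<noteq> k"
    by (metis One_nat_def card_le_Suc_iff numeral_2_eq_2 insertCI)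
  have gt: "1 < a l" if "l \<in> J" for l using a_gt that by (simp add: J_def)
  have "gen S i = a j * (\<Prod>l\<in>J - {j}. a l)"
    using gen i jk(1) by (simp add: J_def prod.remove)
  moreover have "1 < (\<Prod>l\<in>J - {j}. a l)"
  proof -
    have "(\<Prod>l\<in>J - {j}. a l) = a k * (\<Prod>l\<in>J - {j} - {k}. a l)"
      using jk by (simp add: J_def prod.remove)
    moreover have "1 \<le> (\<Prod>l\<in>J - {j} - {k}. a l)"
      using gt by (intro prod_ge_1) (simp add: less_imp_le)
    ultimately show ?thesis using gt[OF jk(2)] by (metis less_le_trans mult_le_mono2 nat_mult_1_right)
  qed
  ultimately show False using prime_product[of "a j"] prime gt[OF jk(1)] by auto
qed

section \<open>The semigroup \<langle>4, 6, 13\<rangle>\<close>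

lemma generated_three:
  fixes x y z :: nat
  assumes "x \<noteq> y" "x \<noteq> z" "y \<noteq> z"
  shows "generated {x, y, z} = {p * x + q * y + r * z | p q r. True}"
proof (intro set_eqI iffI)
  fix n assume "n \<in> generated {x, y, z}"
  then obtain c where "n = (\<Sum>k\<in>{x, y, z}. c k * k)" unfolding generated_def by blast
  then have "n = c x * x + c y * y + c z * z" using assms by (simp add: add.assoc)
  then show "n \<in> {p * x + q * y + r * z | p q r. True}" by blast
next
  fix n assume "n \<in> {p * x + q * y + r * z | p q r. True}"
  then obtain p q r where n: "n = p * x + q * y + r * z" by blast
  define c where "c k = (if k = x then p else if k = y then q else r)" for k
  have "n = (\<Sum>k\<in>{x, y, z}. c k * k)" using assms n by (simp add: c_def add.assoc)
  then show "n \<in> generated {x, y, z}" unfolding generated_def by blast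
qed

abbreviation S_4_6_13 :: "nat set" where
  "S_4_6_13 \<equiv> generated {4, 6, 13}"

lemma even_in_span_4_6:
  fixes n :: nat
  assumes "even n" and "n \<noteq> 2"
  shows "\<exists>p q. n = p * 4 + q * 6"
proof (cases "4 dvd n")
  case True
  then have "n = (n div 4) * 4 + 0 * 6" by simp
  then show ?thesis by blast
next
  case False
  with assms have "n = ((n - 6) div 4) * 4 + 1 * 6" by presburger
  then show ?thesis by blast
qed

lemma mem_S_4_6_13_iff: "n \<in> S_4_6_13 \<longleftrightarrow> n \<notin> {1, 2, 3, 5, 7, 9, 11, 15}"
proof
  assume "n \<in> S_4_6_13"
  then obtain p q r where n: "n = p * 4 + q * 6 + r * 13"
    by (auto simp: generated_three)
  have not_2: "p * 4 + q * 6 \<noteq> 2" by presburger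
  consider "2 \<le> r" | "r = 0" | "r = 1" by linarith
  then show "n \<notin> {1, 2, 3, 5, 7, 9, 11, 15}"
  proof cases
    case 1
    then show ?thesis using n by auto
  next
    case 2
    then have "even n" "n \<noteq> 2" using n not_2 by simp_all
    then show ?thesis by auto
  next
    case 3
    then have "odd n" "13 \<le> n" "n \<noteq> 15" using n not_2 by simp_all
    then show ?thesis by auto
  qed
next
  assume gap: "n \<notin> {1, 2, 3, 5, 7, 9, 11, 15}"
  show "n \<in> S_4_6_13"
  proof (cases "even n")
    case True
    moreover have "n \<noteq> 2" using gap by simp
    ultimately obtain p q where "n = p * 4 + q * 6"
      using even_in_span_4_6 by blast
    then have "n = p * 4 + q * 6 + 0 * 13" by simp
    then have "n \<in> {p * 4 + q * 6 + r * 13 | p q r. True}" by blast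
    then show ?thesis by (simp add: generated_three)
  next
    case False
    from gap have "n \<noteq> 1" "n \<noteq> 3" "n \<noteq> 5" "n \<noteq> 7" "n \<noteq> 9" "n \<noteq> 11" "n \<noteq> 15"
      by simp_all
    with False have ge: "13 \<le> n" and "even (n - 13)" "n - 13 \<noteq> 2" by presburger+
    then obtain p q where "n - 13 = p * 4 + q * 6"
      using even_in_span_4_6 by blast
    then have "n = p * 4 + q * 6 + 1 * 13" using ge by simp
    then have "n \<in> {p * 4 + q * 6 + r * 13 | p q r. True}" by blast
    then show ?thesis by (simp add: generated_three)
  qed
qed

lemma numerical_semigroup_S_4_6_13: "numerical_semigroup S_4_6_13"
proof -
  have "x + y \<in> S_4_6_13" if "x \<in> S_4_6_13" "y \<in> S_4_6_13" for x y
    using that unfolding mem_S_4_6_13_iff by simp presburger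
  moreover have "UNIV - S_4_6_13 = {1, 2, 3, 5, 7, 9, 11, 15}"
    by (auto simp: mem_S_4_6_13_iff)
  ultimately show ?thesis by (simp add: numerical_semigroup_def mem_S_4_6_13_iff)
qed

lemma mingens_S_4_6_13: "mingens S_4_6_13 = {4, 6, 13}"
proof (intro set_eqI iffI)
  fix s assume s: "s \<in> mingens S_4_6_13"
  then have "s \<notin> {1, 2, 3, 5, 7, 9, 11, 15}" "s \<noteq> 0"
    by (auto simp: mingens_def mem_S_4_6_13_iff)
  show "s \<in> {4, 6, 13}"
  proof (rule ccontr)
    assume other: "s \<notin> {4, 6, 13}"
    \<comment> \<open>19 = 6 + 13 is the only non-generator that is not 4 plus an element\<close>
    obtain x where "x \<in> {4, 6}" "s - x \<in> S_4_6_13" "s - x \<noteq> 0" "s = x + (s - x)"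
    proof (cases "s = 19")
      case True
      then show ?thesis by (intro that[of 6]) (auto simp: mem_S_4_6_13_iff)
    next
      case False
      with other \<open>s \<notin> {1, 2, 3, 5, 7, 9, 11, 15}\<close> \<open>s \<noteq> 0\<close>
      have "s \<notin> {0, 1, 2, 3, 4, 5, 6, 7, 9, 11, 13, 15, 19}" by simp
      then have "4 < s" "s - 4 \<notin> {1, 2, 3, 5, 7, 9, 11, 15}"
        by (simp; presburger)+
      then show ?thesis by (intro that[of 4]) (simp_all add: mem_S_4_6_13_iff)
    qed
    moreover have "x \<in> S_4_6_13" "x \<noteq> 0" using \<open>x \<in> {4, 6}\<close> by (auto simp: mem_S_4_6_13_iff)
    ultimately have "\<exists>x\<in>S_4_6_13. \<exists>y\<in>S_4_6_13. x \<noteq> 0 \<and> y \<noteq> 0 \<and> s = x + y" by blast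
    with s show False unfolding mingens_def by blast
  qed
next
  fix s :: nat assume s: "s \<in> {4, 6, 13}"
  have "\<not> (x \<in> S_4_6_13 \<and> y \<in> S_4_6_13 \<and> x \<noteq> 0 \<and> y \<noteq> 0 \<and> s = x + y)" for x y
  proof
    assume "x \<in> S_4_6_13 \<and> y \<in> S_4_6_13 \<and> x \<noteq> 0 \<and> y \<noteq> 0 \<and> s = x + y"
    then have "x \<notin> {1, 2, 3, 5, 7, 9, 11, 15}" "y \<notin> {1, 2, 3, 5, 7, 9, 11, 15}"
      "x \<noteq> 0" "y \<noteq> 0" "s = x + y"
      by (simp_all add: mem_S_4_6_13_iff)
    then show False using s by simp presburger
  qed
  moreover have "s \<in> S_4_6_13" "s \<noteq> 0" using s by (auto simp: mem_S_4_6_13_iff)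
  ultimately show "s \<in> mingens S_4_6_13" unfolding mingens_def by blast
qed

lemma emb_dim_S_4_6_13: "emb_dim S_4_6_13 = 3"
  by (simp add: emb_dim_def mingens_S_4_6_13)

lemma gen_S_4_6_13: "gen S_4_6_13 1 = 4" "gen S_4_6_13 2 = 6" "gen S_4_6_13 3 = 13"
  by (simp_all add: gen_def mingens_S_4_6_13)

lemma multiplicity_S_4_6_13: "Defs.multiplicity S_4_6_13 = 4"
  unfolding Defs.multiplicity_def by (rule gen_S_4_6_13(1))

lemma apery_S_4_6_13: "apery S_4_6_13 = {0, 6, 13, 19}"
proof -
  have "s \<in> apery S_4_6_13 \<longleftrightarrow>
      s \<notin> {1, 2, 3, 5, 7, 9, 11, 15} \<and> (s < 4 \<or> s - 4 \<in> {1, 2, 3, 5, 7, 9, 11, 15})" for s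
    by (simp add: apery_def multiplicity_S_4_6_13 mem_S_4_6_13_iff)
  also have "\<dots> s \<longleftrightarrow> s \<in> {0, 6, 13, 19}" for s
    by simp presburger
  finally show ?thesis by blast
qed

lemma monoid_first_S_4_6_13:
  "monoid_first S_4_6_13 1 = {p * 4 | p. True}"
  "monoid_first S_4_6_13 2 = {p * 4 + q * 6 | p q. True}"
proof -
  have "{1..1::nat} = {1}" "{1..2::nat} = {1, 2}" by auto
  then have one: "(\<Sum>j=1..1. c j * gen S_4_6_13 j) = c 1 * 4"
    and two: "(\<Sum>j=1..2. c j * gen S_4_6_13 j) = c 1 * 4 + c 2 * 6" for c
    by (simp_all add: gen_S_4_6_13 del: One_nat_def)
  have "{c 1 * 4 | c :: nat \<Rightarrow> nat. True} = {p * 4 | p. True}"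
  proof (intro set_eqI iffI)
    fix x assume "x \<in> {p * 4 | p :: nat. True}"
    then obtain p :: nat where "x = p * 4" by blast
    moreover define c where "c j = p" for j :: nat
    ultimately have "x = c 1 * 4" by simp
    then show "x \<in> {c 1 * 4 | c :: nat \<Rightarrow> nat. True}" by blast
  qed blast
  then show "monoid_first S_4_6_13 1 = {p * 4 | p. True}"
    unfolding monoid_first_def one .
  have "{c 1 * 4 + c 2 * 6 | c :: nat \<Rightarrow> nat. True} = {p * 4 + q * 6 | p q. True}"
  proof (intro set_eqI iffI)
    fix x assume "x \<in> {p * 4 + q * 6 | p q :: nat. True}"
    then obtain p q :: nat where "x = p * 4 + q * 6" by blast
    moreover define c where "c j = (if j = 1 then p else q)" for j :: nat
    ultimately have "x = c 1 * 4 + c 2 * 6" by simp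
    then show "x \<in> {c 1 * 4 + c 2 * 6 | c :: nat \<Rightarrow> nat. True}" by blast
  qed blast
  then show "monoid_first S_4_6_13 2 = {p * 4 + q * 6 | p q. True}"
    unfolding monoid_first_def two .
qed

lemma tau_S_4_6_13: "tau S_4_6_13 2 = 1" "tau S_4_6_13 3 = 1"
proof -
  have pred: "(2::nat) - 1 = 1" "(3::nat) - 1 = 2" by simp_all
  have "(LEAST h. 0 < h \<and> h * gen S_4_6_13 2 \<in> monoid_first S_4_6_13 1) = 2"
  proof (rule Least_equality)
    show "0 < (2::nat) \<and> 2 * gen S_4_6_13 2 \<in> monoid_first S_4_6_13 1"
      unfolding monoid_first_S_4_6_13 gen_S_4_6_13 by simp
  next
    fix h assume "0 < h \<and> h * gen S_4_6_13 2 \<in> monoid_first S_4_6_13 1"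
    then obtain p where "0 < h" "h * 6 = p * 4"
      unfolding monoid_first_S_4_6_13 gen_S_4_6_13 by blast
    then show "2 \<le> h" by presburger
  qed
  then show "tau S_4_6_13 2 = 1" unfolding tau_def pred by simp
  have "(LEAST h. 0 < h \<and> h * gen S_4_6_13 3 \<in> monoid_first S_4_6_13 2) = 2"
  proof (rule Least_equality)
    show "0 < (2::nat) \<and> 2 * gen S_4_6_13 3 \<in> monoid_first S_4_6_13 2"
      unfolding monoid_first_S_4_6_13 gen_S_4_6_13 by (simp; presburger)
  next
    fix h assume "0 < h \<and> h * gen S_4_6_13 3 \<in> monoid_first S_4_6_13 2"
    then obtain p q where "0 < h" "h * 13 = p * 4 + q * 6"
      unfolding monoid_first_S_4_6_13 gen_S_4_6_13 by blast
    then show "2 \<le> h" by presburger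
  qed
  then show "tau S_4_6_13 3 = 1" unfolding tau_def pred by simp
qed

lemma alpha_S_4_6_13: "alpha S_4_6_13 2 = 1" "alpha S_4_6_13 3 = 1"
proof -
  have "{h. h * 6 \<in> {0, 6, 13, 19}} = {0, 1 :: nat}" "{h. h * 13 \<in> {0, 6, 13, 19}} = {0, 1 :: nat}"
    by (auto; presburger)+
  then show "alpha S_4_6_13 2 = 1" "alpha S_4_6_13 3 = 1"
    by (simp_all add: alpha_def apery_S_4_6_13 gen_S_4_6_13)
qed

lemma apery_box_S_4_6_13:
  assumes "b 2 = 1" and "b 3 = 1"
  shows "apery_box S_4_6_13 b = {0, 6, 13, 19}"
proof -
  have idx: "{2..emb_dim S_4_6_13} = {2, 3}" by (auto simp: emb_dim_S_4_6_13)
  have "apery_box S_4_6_13 b = {c 2 * 6 + c 3 * 13 | c :: nat \<Rightarrow> nat. c 2 \<le> 1 \<and> c 3 \<le> 1}"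
    using assms by (simp add: apery_box_def idx gen_S_4_6_13)
  also have "\<dots> = {0, 6, 13, 19}"
  proof (intro set_eqI iffI)
    fix x assume "x \<in> {c 2 * 6 + c 3 * 13 | c :: nat \<Rightarrow> nat. c 2 \<le> 1 \<and> c 3 \<le> 1}"
    then show "x \<in> {0, 6, 13, 19}" by (auto simp: le_Suc_eq)
  next
    fix x :: nat assume "x \<in> {0, 6, 13, 19}"
    then obtain y z :: nat where "y \<le> 1" "z \<le> 1" "x = y * 6 + z * 13" by force
    moreover define c where "c i = (if i = 2 then y else z)" for i :: nat
    ultimately have "x = c 2 * 6 + c 3 * 13" "c 2 \<le> 1" "c 3 \<le> 1"
      by (simp_all add: c_def)
    then show "x \<in> {c 2 * 6 + c 3 * 13 | c :: nat \<Rightarrow> nat. c 2 \<le> 1 \<and> c 3 \<le> 1}" by blast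
  qed
  finally show ?thesis .
qed

lemma telescopic_S_4_6_13: "telescopic S_4_6_13"
  by (simp add: telescopic_iff_apery_box apery_S_4_6_13 apery_box_S_4_6_13 tau_S_4_6_13)

lemma alpha_rectangular_S_4_6_13: "alpha_rectangular S_4_6_13"
  by (simp add: alpha_rectangular_iff_apery_box apery_S_4_6_13 apery_box_S_4_6_13 alpha_S_4_6_13)

lemma plane_branch_S_4_6_13: "plane_branch S_4_6_13"
proof -
  have "{2..<emb_dim S_4_6_13} = {2}" by (auto simp: emb_dim_S_4_6_13)
  then show ?thesis
    by (simp add: plane_branch_def telescopic_S_4_6_13 tau_S_4_6_13 gen_S_4_6_13)
qed

lemma not_unique_betti_S_4_6_13: "\<not> unique_betti S_4_6_13"
proof
  assume "unique_betti S_4_6_13"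
  then have "\<not> prime (gen S_4_6_13 3)"
    by (rule unique_betti_gen_not_prime) (simp_all add: emb_dim_S_4_6_13)
  moreover have "prime (13::nat)"
  proof -
    have "{2..<13::nat} = {2, 3, 4, 5, 6, 7, 8, 9, 10, 11, 12}" by (auto; presburger)
    then show ?thesis unfolding prime_nat_iff' by (simp add: dvd_eq_mod_eq_0)
  qed
  ultimately show False by (simp add: gen_S_4_6_13)
qed

theorem mainTheorem5:
  shows "(\<forall>S :: nat set. numerical_semigroup S \<and> unique_betti S \<longrightarrow>
            telescopic S \<and> alpha_rectangular S) \<and>
         (numerical_semigroup (generated {4, 6, 13}) \<and>
          plane_branch (generated {4, 6, 13}) \<and>
          telescopic (generated {4, 6, 13}) \<and>
          alpha_rectangular (generated {4, 6, 13}) \<and>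
          \<not> unique_betti (generated {4, 6, 13}))"
  using unique_betti_imp_telescopic_alpha_rectangular numerical_semigroup_S_4_6_13
    plane_branch_S_4_6_13 telescopic_S_4_6_13 alpha_rectangular_S_4_6_13
    not_unique_betti_S_4_6_13
  by blast

end
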